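(* Let $P(X_1,\ldots,X_n)$ be a polynomial over $\mathbb{C}$ which is symmetric in $X_1,\ldots,X_n$. Then $$P(E_{k_1},\ldots,E_{k_n})\prod_{1\le i<j\le n}\frac{k_j-k_i}{j-i}=P(1,\ldots,1)\cdot\prod_{1\le i<j\le n}\frac{k_j-k_i}{j-i}.$$
   Context: $E_{k_j}$ denotes the shift operator in the variable $k_j$ acting on $\mathbb{C}[k_1,\ldots,k_n]$, $E_{k_j}F(\ldots,k_j,\ldots)=F(\ldots,k_j+1,\ldots)$; since these commute, $P(E_{k_1},\ldots,E_{k_n})$ is a well-defined operator (products are compositions, and $1$ corresponds to the identity). *)

theory Defs
  imports "HOL-Combinatorics.Permutations" Complex_Main
begin

text \<open>A polynomial in the n variables X_0,...,X_(n-1) over the complex numbers is represented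
by its coefficient function on exponent vectors: c alpha is the coefficient of the monomial
prod_i X_i^(alpha i).\<close>

definition is_poly :: "nat \<Rightarrow> ((nat \<Rightarrow> nat) \<Rightarrow> complex) \<Rightarrow> bool" where
  "is_poly n c \<longleftrightarrow> finite {\<alpha>. c \<alpha> \<noteq> 0} \<and> (\<forall>\<alpha>. c \<alpha> \<noteq> 0 \<longrightarrow> (\<forall>i\<ge>n. \<alpha> i = 0))"

definition is_symmetric_poly :: "nat \<Rightarrow> ((nat \<Rightarrow> nat) \<Rightarrow> complex) \<Rightarrow> bool" where
  "is_symmetric_poly n c \<longleftrightarrow> is_poly n c \<and>
     (\<forall>\<sigma>. \<sigma> permutes {..<n} \<longrightarrow> (\<forall>\<alpha>. c (\<alpha> \<circ> \<sigma>) = c \<alpha>))"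

definition poly_eval :: "((nat \<Rightarrow> nat) \<Rightarrow> complex) \<Rightarrow> (nat \<Rightarrow> complex) \<Rightarrow> complex" where
  "poly_eval c x = (\<Sum>\<alpha>\<in>{\<alpha>. c \<alpha> \<noteq> 0}. c \<alpha> * (\<Prod>i\<in>{i. \<alpha> i \<noteq> 0}. x i ^ \<alpha> i))"

text \<open>The operator P(E_{k_0},...,E_{k_(n-1)}) applied to a function F of k:
  the monomial prod E_{k_i}^(alpha i) sends F to k \<mapsto> F(k + alpha).\<close>
definition shift_op :: "((nat \<Rightarrow> nat) \<Rightarrow> complex) \<Rightarrow> ((nat \<Rightarrow> complex) \<Rightarrow> complex)
    \<Rightarrow> (nat \<Rightarrow> complex) \<Rightarrow> complex" where
  "shift_op c F k = (\<Sum>\<alpha>\<in>{\<alpha>. c \<alpha> \<noteq> 0}. c \<alpha> * F (\<lambda>i. k i + of_nat (\<alpha> i)))"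

definition vdm :: "nat \<Rightarrow> (nat \<Rightarrow> complex) \<Rightarrow> complex" where
  "vdm n k = (\<Prod>j\<in>{..<n}. \<Prod>i\<in>{..<j}. (k j - k i) / (of_nat j - of_nat i))"

end

(*
  Up to the constant prod_{i<j} (j - i), the product in the statement is the Vandermonde
  determinant, i.e. the alternant Delta(k) = sum_pi sign pi * prod_j k_j ^ pi(j).  Expanding
  every (k_j + alpha_j) ^ pi(j) binomially writes sum_alpha c_alpha Delta(k + alpha) as a
  combination of monomials k^m with all m_j < n.  If m_a = m_b for some a ~= b, swapping the
  positions a and b in both alpha and pi is a sign-reversing involution that preserves c (by
  symmetry), so the coefficient of k^m vanishes.  Otherwise m is a permutation; as a binomial
  coefficient (e choose m) vanishes for m > e, only pi = m contributes, and with coefficient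
  sum_alpha c_alpha = P(1,...,1).
*)

theory Submission
  imports Defs "HOL-Computational_Algebra.Polynomial" "HOL-Library.Disjoint_Sets"
begin

definition alternant :: "nat \<Rightarrow> (nat \<Rightarrow> 'a::comm_ring_1) \<Rightarrow> 'a" where
  "alternant n x = (\<Sum>\<pi> | \<pi> permutes {..<n}. of_int (sign \<pi>) * (\<Prod>j<n. x j ^ \<pi> j))"

lemma sign_compose_transpose:
  assumes "permutation \<pi>" "a \<noteq> b"
  shows "sign (\<pi> \<circ> transpose a b) = - sign \<pi>"
  using sign_compose[OF assms(1) permutation_swap_id] by (simp add: sign_swap_id assms(2))

lemma compose_transpose_neq:
  assumes "inj \<pi>" "a \<noteq> b"
  shows "\<pi> \<circ> transpose a b \<noteq> \<pi>"
proof
  assume "\<pi> \<circ> transpose a b = \<pi>"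
  then have "\<pi> b = \<pi> a" by (metis comp_apply transpose_apply_first)
  with assms show False by (simp add: inj_eq)
qed

lemma alternant_eq_0_if_eq:
  assumes "a < n" "b < n" "a \<noteq> b" "x a = x b"
  shows "alternant n x = 0"
  unfolding alternant_def
proof (rule sum_involution_eq_0[where h = "\<lambda>\<pi>. \<pi> \<circ> transpose a b"], safe)
  let ?t = "transpose a b"
  have t: "?t permutes {..<n}" using assms by (simp add: permutes_swap_id)
  fix \<pi> assume \<pi>: "\<pi> permutes {..<n}"
  show "\<pi> \<circ> ?t permutes {..<n}" using permutes_compose[OF t \<pi>] .
  show "\<pi> \<circ> ?t \<circ> ?t = \<pi>" by (simp add: fun_eq_iff)
  show "\<pi> \<circ> ?t = \<pi> \<Longrightarrow> False"
    using compose_transpose_neq[OF permutes_inj[OF \<pi>] assms(3)] by blast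
  have "(\<Prod>j<n. x j ^ (\<pi> \<circ> ?t) j) = (\<Prod>j<n. x (?t j) ^ \<pi> (?t j))"
    using assms(4) by (intro prod.cong) (auto simp: transpose_def)
  also have "\<dots> = (\<Prod>j<n. x j ^ \<pi> j)"
    using prod.permute[OF t, of "\<lambda>j. x j ^ \<pi> j"] by (simp add: o_def)
  finally have prod: "(\<Prod>j<n. x j ^ (\<pi> \<circ> ?t) j) = (\<Prod>j<n. x j ^ \<pi> j)" .
  have sign: "sign (\<pi> \<circ> ?t) = - sign \<pi>"
    using \<pi> assms(3) finite_lessThan by (metis permutation_permutes sign_compose_transpose)
  show "of_int (sign (\<pi> \<circ> ?t)) * (\<Prod>j<n. x j ^ (\<pi> \<circ> ?t) j)
      + of_int (sign \<pi>) * (\<Prod>j<n. x j ^ \<pi> j) = 0"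
    unfolding prod sign by simp
qed

lemma alternant_Suc_is_poly:
  fixes x :: "nat \<Rightarrow> 'a::comm_ring_1"
  shows "\<exists>p. degree p \<le> n \<and> coeff p n = alternant n x \<and>
           (\<forall>z. poly p z = alternant (Suc n) (x(n := z)))"
proof -
  define a where "a b = (\<Sum>q | q permutes {..<n}. of_int (sign (transpose n b \<circ> q)) *
                  (\<Prod>j<n. x j ^ (transpose n b \<circ> q) j))" for b
  define p where "p = (\<Sum>b\<le>n. monom (a b) b)"
  have expand: "alternant (Suc n) (x(n := z)) = (\<Sum>b\<le>n. a b * z ^ b)" for z
  proof -
    let ?X = "x(n := z)"
    have ins: "{..<Suc n} = insert n {..<n}" by auto
    have "alternant (Suc n) ?X = (\<Sum>b\<in>insert n {..<n}. \<Sum>q | q permutes {..<n}.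
        of_int (sign (transpose n b \<circ> q)) * (\<Prod>j\<in>insert n {..<n}. ?X j ^ (transpose n b \<circ> q) j))"
      unfolding alternant_def ins by (rule sum_over_permutations_insert) auto
    also have "\<dots> = (\<Sum>b\<in>insert n {..<n}. a b * z ^ b)"
      unfolding a_def sum_distrib_right
    proof (intro sum.cong refl)
      fix b q assume "q \<in> {q. q permutes {..<n}}"
      then have "q n = n" by (simp add: permutes_def)
      moreover have "(\<Prod>j<n. ?X j ^ (transpose n b \<circ> q) j) = (\<Prod>j<n. x j ^ (transpose n b \<circ> q) j)"
        by (rule prod.cong) auto
      ultimately show "of_int (sign (transpose n b \<circ> q)) * (\<Prod>j\<in>insert n {..<n}. ?X j ^ (transpose n b \<circ> q) j)
          = of_int (sign (transpose n b \<circ> q)) * (\<Prod>j<n. x j ^ (transpose n b \<circ> q) j) * z ^ b"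
        by (simp add: ac_simps)
    qed
    also have "\<dots> = (\<Sum>b\<le>n. a b * z ^ b)"
      by (simp only: ins[symmetric] lessThan_Suc_atMost)
    finally show ?thesis .
  qed
  show ?thesis
  proof (intro exI conjI allI)
    show "degree p \<le> n"
      unfolding p_def by (intro degree_sum_le) (auto intro: order.trans[OF degree_monom_le])
    show "coeff p n = alternant n x"
      unfolding p_def alternant_def a_def by (simp add: coeff_sum coeff_monom)
    show "poly p z = alternant (Suc n) (x(n := z))" for z
      unfolding p_def expand
      by (simp add: poly_sum poly_monom)
  qed
qed

lemma alternant_eq_vandermonde:
  fixes x :: "nat \<Rightarrow> 'a::idom"
  shows "alternant n x = (\<Prod>j<n. \<Prod>i<j. x j - x i)"
proof (induction n)
  case 0
  then show ?case by (simp add: alternant_def)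
next
  case (Suc n)
  show ?case
  proof (cases "inj_on x {..<n}")
    case False
    then obtain a b where ab: "a < n" "b < n" "a \<noteq> b" "x a = x b"
      unfolding inj_on_def by auto
    then have "alternant (Suc n) x = 0" "alternant n x = 0"
      by (auto intro: alternant_eq_0_if_eq[of a _ b])
    with Suc.IH show ?thesis by simp
  next
    case True
    obtain p where deg: "degree p \<le> n" and lc: "coeff p n = alternant n x"
      and p: "\<And>z. poly p z = alternant (Suc n) (x(n := z))"
      using alternant_Suc_is_poly by blast
    define r where "r = (\<Prod>i<n. [:- x i, 1:])"
    define q where "q = smult (alternant n x) r"
    have "degree r = n"
      unfolding r_def by (simp add: degree_prod_sum_eq)
    have "lead_coeff r = 1"
      unfolding r_def by (simp add: lead_coeff_prod)
    have "p = q"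
    proof (rule poly_eqI_degree_lead_coeff[where A = "x ` {..<n}" and n = n])
      show "coeff p n = coeff q n" "degree q \<le> n"
        unfolding q_def lc using \<open>degree r = n\<close> \<open>lead_coeff r = 1\<close> by simp_all
      show "n \<le> card (x ` {..<n})" using card_image[OF True] by simp
      fix z assume "z \<in> x ` {..<n}"
      then obtain i where "i < n" "z = x i" by auto
      then have "poly p z = 0"
        unfolding p by (intro alternant_eq_0_if_eq[of i "Suc n" n]) auto
      moreover have "poly q z = 0"
        using \<open>i < n\<close> \<open>z = x i\<close> by (auto simp: q_def r_def poly_prod)
      ultimately show "poly p z = poly q z" by simp
    qed (rule deg)
    have "alternant (Suc n) x = poly q (x n)" using p[of "x n"] \<open>p = q\<close> by simp
    also have "\<dots> = alternant n x * (\<Prod>i<n. x n - x i)" by (simp add: q_def r_def poly_prod)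
    finally show ?thesis using Suc.IH by simp
  qed
qed

definition shifted_monomial_coeff ::
    "nat \<Rightarrow> (nat \<Rightarrow> 'a::comm_semiring_1) \<Rightarrow> (nat \<Rightarrow> nat) \<Rightarrow> (nat \<Rightarrow> nat) \<Rightarrow> 'a" where
  "shifted_monomial_coeff n y e m = (\<Prod>j<n. of_nat (e j choose m j) * y j ^ (e j - m j))"

lemma prod_power_add_eq_sum_shifted_monomials:
  fixes x y :: "nat \<Rightarrow> 'a::comm_semiring_1"
  assumes "\<And>j. j < n \<Longrightarrow> e j < d"
  shows "(\<Prod>j<n. (x j + y j) ^ e j)
       = (\<Sum>m\<in>PiE {..<n} (\<lambda>_. {..<d}). shifted_monomial_coeff n y e m * (\<Prod>j<n. x j ^ m j))"
proof -
  have "(x j + y j) ^ e j = (\<Sum>i<d. of_nat (e j choose i) * y j ^ (e j - i) * x j ^ i)" if "j < n" for j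
  proof -
    have "(x j + y j) ^ e j = (\<Sum>i\<le>e j. of_nat (e j choose i) * x j ^ i * y j ^ (e j - i))"
      by (rule binomial_ring)
    also have "\<dots> = (\<Sum>i<d. of_nat (e j choose i) * x j ^ i * y j ^ (e j - i))"
      using assms[OF that] by (intro sum.mono_neutral_left) (auto simp: binomial_eq_0 not_le)
    finally show ?thesis by (simp add: mult_ac)
  qed
  then have "(\<Prod>j<n. (x j + y j) ^ e j)
      = (\<Prod>j<n. \<Sum>i<d. of_nat (e j choose i) * y j ^ (e j - i) * x j ^ i)"
    by (intro prod.cong) auto
  also have "\<dots> = (\<Sum>m\<in>PiE {..<n} (\<lambda>_. {..<d}).
      \<Prod>j<n. of_nat (e j choose m j) * y j ^ (e j - m j) * x j ^ m j)"
    by (rule prod_sum_PiE) auto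
  also have "\<dots> = (\<Sum>m\<in>PiE {..<n} (\<lambda>_. {..<d}). shifted_monomial_coeff n y e m * (\<Prod>j<n. x j ^ m j))"
    by (simp add: shifted_monomial_coeff_def prod.distrib)
  finally show ?thesis .
qed

lemma shifted_monomial_coeff_eq_0: "j < n \<Longrightarrow> e j < m j \<Longrightarrow> shifted_monomial_coeff n y e m = 0"
  unfolding shifted_monomial_coeff_def by (intro prod_zero) (auto simp: binomial_eq_0 intro!: bexI[of _ j])

lemma shifted_monomial_coeff_permute:
  assumes "\<sigma> permutes {..<n}"
  shows "shifted_monomial_coeff n (y \<circ> \<sigma>) (e \<circ> \<sigma>) (m \<circ> \<sigma>) = shifted_monomial_coeff n y e m"
  unfolding shifted_monomial_coeff_def
  using prod.permute[OF assms, of "\<lambda>j. of_nat (e j choose m j) * y j ^ (e j - m j)"] by (simp add: o_def)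

lemma le_on_same_image_imp_eq:
  fixes f g :: "'a \<Rightarrow> 'b::ordered_cancel_comm_monoid_add"
  assumes "finite A" "inj_on f A" "inj_on g A" "f ` A = g ` A" "\<And>x. x \<in> A \<Longrightarrow> f x \<le> g x"
    and "x \<in> A"
  shows "f x = g x"
proof (rule ccontr)
  assume "f x \<noteq> g x"
  then have "sum f A < sum g A"
    using assms by (intro sum_strict_mono_ex1) (auto intro: order.not_eq_order_implies_strict)
  moreover have "sum f A = sum g A"
    using sum.reindex[OF assms(2), of id] sum.reindex[OF assms(3), of id] assms(4) by simp
  ultimately show False by simp
qed

lemma shifted_monomial_coeff_permutation:
  assumes \<pi>: "\<pi> permutes {..<n}" and m: "m \<in> PiE {..<n} (\<lambda>_. {..<n})" "inj_on m {..<n}"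
  shows "shifted_monomial_coeff n y \<pi> m = (if restrict \<pi> {..<n} = m then 1 else 0)"
proof (cases "\<forall>j<n. m j \<le> \<pi> j")
  case True
  have "m ` {..<n} = \<pi> ` {..<n}"
    using m \<pi> by (simp add: endo_inj_surj PiE_iff image_subset_iff permutes_image)
  then have "m j = \<pi> j" if "j < n" for j
    using True m \<pi> that by (intro le_on_same_image_imp_eq[of "{..<n}" m \<pi>]) (auto intro: permutes_inj_on)
  then have "restrict \<pi> {..<n} = m" and "shifted_monomial_coeff n y \<pi> m = 1"
    using m by (auto simp: fun_eq_iff PiE_iff extensional_def shifted_monomial_coeff_def)
  then show ?thesis by simp
next
  case False
  then obtain j where "j < n" "\<pi> j < m j" by auto
  then show ?thesis by (auto simp: shifted_monomial_coeff_eq_0)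
qed

lemma symmetrized_shifted_monomial_coeff_eq_0:
  fixes c :: "(nat \<Rightarrow> nat) \<Rightarrow> 'a::comm_ring_1"
  assumes sym: "\<And>\<sigma> \<alpha>. \<sigma> permutes {..<n} \<Longrightarrow> c (\<alpha> \<circ> \<sigma>) = c \<alpha>"
    and ab: "a < n" "b < n" "a \<noteq> b" "m a = m b"
  shows "(\<Sum>\<alpha> | c \<alpha> \<noteq> 0. \<Sum>\<pi> | \<pi> permutes {..<n}.
           c \<alpha> * of_int (sign \<pi>) * shifted_monomial_coeff n (of_nat \<circ> \<alpha>) \<pi> m) = 0"
  unfolding sum.cartesian_product
proof (rule sum_involution_eq_0[where h = "\<lambda>(\<alpha>, \<pi>). (\<alpha> \<circ> transpose a b, \<pi> \<circ> transpose a b)"],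
    safe)
  let ?t = "transpose a b"
  have t: "?t permutes {..<n}" using ab by (simp add: permutes_swap_id)
  have "m \<circ> ?t = m" using ab by (auto simp: fun_eq_iff transpose_def)
  fix \<alpha> \<pi> assume \<alpha>: "c \<alpha> \<noteq> 0" and \<pi>: "\<pi> permutes {..<n}"
  show "c (\<alpha> \<circ> ?t) = 0 \<Longrightarrow> False" using \<alpha> sym[OF t] by simp
  show "\<pi> \<circ> ?t permutes {..<n}" using permutes_compose[OF t \<pi>] .
  show "\<alpha> \<circ> ?t \<circ> ?t = \<alpha>" "\<pi> \<circ> ?t \<circ> ?t = \<pi>" by (simp_all add: fun_eq_iff)
  show "\<alpha> \<circ> ?t = \<alpha> \<Longrightarrow> \<pi> \<circ> ?t = \<pi> \<Longrightarrow> False"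
    using compose_transpose_neq[OF permutes_inj[OF \<pi>] ab(3)] by blast
  have "shifted_monomial_coeff n (of_nat \<circ> (\<alpha> \<circ> ?t)) (\<pi> \<circ> ?t) m
      = shifted_monomial_coeff n ((of_nat \<circ> \<alpha>) \<circ> ?t) (\<pi> \<circ> ?t) (m \<circ> ?t)"
    by (simp add: \<open>m \<circ> ?t = m\<close> o_assoc)
  also have "\<dots> = shifted_monomial_coeff n (of_nat \<circ> \<alpha>) \<pi> m"
    by (rule shifted_monomial_coeff_permute[OF t])
  finally have coeff: "shifted_monomial_coeff n (of_nat \<circ> (\<alpha> \<circ> ?t)) (\<pi> \<circ> ?t) m
      = shifted_monomial_coeff n (of_nat \<circ> \<alpha>) \<pi> m" .
  have sign: "sign (\<pi> \<circ> ?t) = - sign \<pi>"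
    using \<pi> ab(3) finite_lessThan by (metis permutation_permutes sign_compose_transpose)
  show "c (\<alpha> \<circ> ?t) * of_int (sign (\<pi> \<circ> ?t)) * shifted_monomial_coeff n (of_nat \<circ> (\<alpha> \<circ> ?t)) (\<pi> \<circ> ?t) m
      + c \<alpha> * of_int (sign \<pi>) * shifted_monomial_coeff n (of_nat \<circ> \<alpha>) \<pi> m = 0"
    unfolding coeff sign sym[OF t] by simp
qed

lemma symmetrized_shifted_monomial_coeff:
  fixes c :: "(nat \<Rightarrow> nat) \<Rightarrow> 'a::comm_ring_1"
  assumes sym: "\<And>\<sigma> \<alpha>. \<sigma> permutes {..<n} \<Longrightarrow> c (\<alpha> \<circ> \<sigma>) = c \<alpha>"
    and m: "m \<in> PiE {..<n} (\<lambda>_. {..<n})"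
  shows "(\<Sum>\<alpha> | c \<alpha> \<noteq> 0. \<Sum>\<pi> | \<pi> permutes {..<n}.
            c \<alpha> * of_int (sign \<pi>) * shifted_monomial_coeff n (of_nat \<circ> \<alpha>) \<pi> m)
       = (\<Sum>\<alpha> | c \<alpha> \<noteq> 0. c \<alpha>) *
         (\<Sum>\<pi> | \<pi> permutes {..<n} \<and> restrict \<pi> {..<n} = m. of_int (sign \<pi>))"
proof (cases "inj_on m {..<n}")
  case True
  have "(\<Sum>\<alpha> | c \<alpha> \<noteq> 0. \<Sum>\<pi> | \<pi> permutes {..<n}.
            c \<alpha> * of_int (sign \<pi>) * shifted_monomial_coeff n (of_nat \<circ> \<alpha>) \<pi> m)
      = (\<Sum>\<alpha> | c \<alpha> \<noteq> 0. \<Sum>\<pi> | \<pi> permutes {..<n}.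
            c \<alpha> * (if restrict \<pi> {..<n} = m then of_int (sign \<pi>) else 0))"
    by (intro sum.cong refl) (simp add: shifted_monomial_coeff_permutation[OF _ m True])
  moreover have "(\<Sum>\<pi> | \<pi> permutes {..<n} \<and> restrict \<pi> {..<n} = m. of_int (sign \<pi>))
      = (\<Sum>\<pi> | \<pi> permutes {..<n}. if restrict \<pi> {..<n} = m then of_int (sign \<pi>) else 0 :: 'a)"
    by (subst sum.inter_filter[symmetric]) (simp_all add: finite_permutations)
  ultimately show ?thesis
    by (simp add: sum_distrib_left sum_distrib_right sum.swap[where A = "{\<alpha>. c \<alpha> \<noteq> 0}"])
next
  case False
  then obtain a b where ab: "a < n" "b < n" "a \<noteq> b" "m a = m b"
    unfolding inj_on_def by auto
  have "\<not> (\<pi> permutes {..<n} \<and> restrict \<pi> {..<n} = m)" for \<pi>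
  proof
    assume "\<pi> permutes {..<n} \<and> restrict \<pi> {..<n} = m"
    then have "inj_on m {..<n}" using permutes_inj_on[of \<pi> "{..<n}" "{..<n}"] by auto
    with False show False ..
  qed
  then have no_perm: "{\<pi>. \<pi> permutes {..<n} \<and> restrict \<pi> {..<n} = m} = {}"
    by blast
  show ?thesis
    unfolding no_perm using symmetrized_shifted_monomial_coeff_eq_0[where c = c, OF sym ab] by simp
qed

lemma alternant_add_eq_sum_monomials:
  "alternant n (\<lambda>j. x j + y j) = (\<Sum>m\<in>PiE {..<n} (\<lambda>_. {..<n}).
      (\<Sum>\<pi> | \<pi> permutes {..<n}. of_int (sign \<pi>) * shifted_monomial_coeff n y \<pi> m) *
      (\<Prod>j<n. x j ^ m j))"
proof -
  have "(\<Prod>j<n. (x j + y j) ^ \<pi> j)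
      = (\<Sum>m\<in>PiE {..<n} (\<lambda>_. {..<n}). shifted_monomial_coeff n y \<pi> m * (\<Prod>j<n. x j ^ m j))"
    if "\<pi> permutes {..<n}" for \<pi>
    using permutes_in_image[OF that] by (intro prod_power_add_eq_sum_shifted_monomials) simp
  then show ?thesis
    unfolding alternant_def
    by (simp add: sum_distrib_left sum_distrib_right sum.swap[where B = "PiE {..<n} (\<lambda>_. {..<n})"] mult_ac)
qed

lemma sum_restrict_permutations_monomials:
  "(\<Sum>m\<in>PiE {..<n} (\<lambda>_. {..<n}).
      (\<Sum>\<pi> | \<pi> permutes {..<n} \<and> restrict \<pi> {..<n} = m. of_int (sign \<pi>)) *
      (\<Prod>j<n. x j ^ m j)) = alternant n x"
proof -
  let ?M = "PiE {..<n} (\<lambda>_. {..<n})"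
  let ?f = "\<lambda>\<pi>. of_int (sign \<pi>) * (\<Prod>j<n. x j ^ \<pi> j)"
  have "(\<Sum>m\<in>?M. (\<Sum>\<pi> | \<pi> permutes {..<n} \<and> restrict \<pi> {..<n} = m. of_int (sign \<pi>)) *
          (\<Prod>j<n. x j ^ m j))
      = (\<Sum>m\<in>?M. \<Sum>\<pi> | \<pi> \<in> {\<pi>. \<pi> permutes {..<n}} \<and> restrict \<pi> {..<n} = m. ?f \<pi>)"
    unfolding sum_distrib_right by (intro sum.cong refl) (auto intro!: prod.cong)
  also have "\<dots> = (\<Sum>\<pi> | \<pi> permutes {..<n}. ?f \<pi>)"
  proof (rule sum.group)
    show "(\<lambda>\<pi>. restrict \<pi> {..<n}) ` {\<pi>. \<pi> permutes {..<n}} \<subseteq> ?M"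
      using permutes_in_image[of _ "{..<n}"] by (intro image_subsetI) (simp add: restrict_PiE_iff)
  qed (simp_all add: finite_permutations finite_PiE)
  finally show ?thesis
    unfolding alternant_def .
qed

(* No finiteness of the support of c is needed: over an infinite support both sides are 0. *)
lemma sum_symmetric_shifts_alternant:
  fixes c :: "(nat \<Rightarrow> nat) \<Rightarrow> 'a::comm_ring_1"
  assumes sym: "\<And>\<sigma> \<alpha>. \<sigma> permutes {..<n} \<Longrightarrow> c (\<alpha> \<circ> \<sigma>) = c \<alpha>"
  shows "(\<Sum>\<alpha> | c \<alpha> \<noteq> 0. c \<alpha> * alternant n (\<lambda>j. k j + of_nat (\<alpha> j)))
       = (\<Sum>\<alpha> | c \<alpha> \<noteq> 0. c \<alpha>) * alternant n k"
proof -
  let ?M = "PiE {..<n} (\<lambda>_. {..<n})"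
  have "(\<Sum>\<alpha> | c \<alpha> \<noteq> 0. c \<alpha> * alternant n (\<lambda>j. k j + of_nat (\<alpha> j)))
      = (\<Sum>m\<in>?M. (\<Sum>\<alpha> | c \<alpha> \<noteq> 0. \<Sum>\<pi> | \<pi> permutes {..<n}.
           c \<alpha> * of_int (sign \<pi>) * shifted_monomial_coeff n (of_nat \<circ> \<alpha>) \<pi> m) *
         (\<Prod>j<n. k j ^ m j))"
    using alternant_add_eq_sum_monomials[where x = k and y = "of_nat \<circ> \<alpha>" for \<alpha>]
    by (simp add: sum_distrib_left sum_distrib_right sum.swap[where B = ?M] mult_ac)
  also have "\<dots> = (\<Sum>m\<in>?M. ((\<Sum>\<alpha> | c \<alpha> \<noteq> 0. c \<alpha>) *
      (\<Sum>\<pi> | \<pi> permutes {..<n} \<and> restrict \<pi> {..<n} = m. of_int (sign \<pi>))) *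
      (\<Prod>j<n. k j ^ m j))"
    by (intro sum.cong refl) (simp add: symmetrized_shifted_monomial_coeff[where c = c, OF sym])
  also have "\<dots> = (\<Sum>\<alpha> | c \<alpha> \<noteq> 0. c \<alpha>) * alternant n k"
    by (simp only: mult.assoc sum_distrib_left[symmetric] sum_restrict_permutations_monomials)
  finally show ?thesis .
qed

lemma vdm_eq_alternant: "vdm n k = alternant n k / (\<Prod>j<n. \<Prod>i<j. of_nat j - of_nat i)"
  unfolding vdm_def alternant_eq_vandermonde by (simp add: prod_dividef)

theorem lemma5:
  fixes n :: nat and c :: "(nat \<Rightarrow> nat) \<Rightarrow> complex"
  assumes "is_symmetric_poly n c"
  shows "shift_op c (vdm n) = (\<lambda>k. poly_eval c (\<lambda>_. 1) * vdm n k)"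
proof
  fix k
  let ?C = "\<Prod>j<n. \<Prod>i<j. of_nat j - of_nat i :: complex"
  have sym: "\<And>\<sigma> \<alpha>. \<sigma> permutes {..<n} \<Longrightarrow> c (\<alpha> \<circ> \<sigma>) = c \<alpha>"
    using assms by (simp add: is_symmetric_poly_def)
  have "shift_op c (vdm n) k = (\<Sum>\<alpha> | c \<alpha> \<noteq> 0. c \<alpha> * alternant n (\<lambda>j. k j + of_nat (\<alpha> j))) / ?C"
    unfolding shift_op_def vdm_eq_alternant by (simp add: sum_divide_distrib)
  also have "\<dots> = (\<Sum>\<alpha> | c \<alpha> \<noteq> 0. c \<alpha>) * alternant n k / ?C"
    by (simp add: sum_symmetric_shifts_alternant[where c = c, OF sym])
  also have "\<dots> = poly_eval c (\<lambda>_. 1) * vdm n k"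
    by (simp add: poly_eval_def vdm_eq_alternant)
  finally show "shift_op c (vdm n) k = poly_eval c (\<lambda>_. 1) * vdm n k" .
qed

end
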